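(* On a three-letter alphabet: (1) there exists a $1$-regular word of length $n\ge 1$ if and only if $n=3k$ for some integer $k\ge 2$; (2) there exists a $2$-regular word of length $n\ge 1$ if and only if $n=9k$ for some integer $k\ge 2$.
   Context: For a word $u=u_1\cdots u_m$ over an alphabet $\mathcal A$ with $b$ letters and an integer $r\ge -1$, $u$ is $r$-regular if for every $k=0,1,\dots,r$ the sum $\sum_{1\le t\le m,\ u_t=c} t^k$ is the same for all letters $c\in\mathcal A$ (a letter not occurring contributes $0$). Here $b=3$. *)

theory Defs
  imports Main
begin

definition pos_power_sum :: "'a list \<Rightarrow> 'a \<Rightarrow> nat \<Rightarrow> nat" where
  "pos_power_sum u c k = (\<Sum>t\<in>{1..length u}. if u ! (t - 1) = c then t ^ k else 0)"

definition regular :: "'a set \<Rightarrow> int \<Rightarrow> 'a list \<Rightarrow> bool" where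
  "regular A r u \<longleftrightarrow> set u \<subseteq> A \<and>
     (\<forall>k::nat. int k \<le> r \<longrightarrow> (\<forall>c\<in>A. \<forall>d\<in>A. pos_power_sum u c k = pos_power_sum u d k))"

end

theory Submission
  imports Defs
begin

text \<open>Sufficiency: shifting all positions of a word by s turns each power sum of degree k into a
  binomial combination of power sums of degree at most k, so the concatenation of two r-regular
  words is r-regular. Hence explicit 1-regular words of lengths 6 and 9 and 2-regular words of
  lengths 18 and 27 generate all lengths 3m and 9m with m \<ge> 2.

  Necessity: in an r-regular word over three letters the positions of every letter carry a third
  of \<open>\<Sum>t=1..n. t^k\<close> for k \<le> r. Take the letter at position 1 and its position set S.
  Degree 0 gives n = 3|S|; degree 1 excludes |S| = 1, since then S = {1} would have to sum to 2.
  Degree 2 gives 6 \<Sum>S t^2 = m(3m+1)(6m+1) for n = 3m, which forces 3 | m; and n = 9 is impossible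
  because S = {1, q, r} would need q + r = 14 and q^2 + r^2 = 94.\<close>

fun pos_power_sum_from :: "nat \<Rightarrow> 'a list \<Rightarrow> 'a \<Rightarrow> nat \<Rightarrow> nat" where
  "pos_power_sum_from s [] c k = 0"
| "pos_power_sum_from s (x # u) c k = (if x = c then (s + 1) ^ k else 0) + pos_power_sum_from (s + 1) u c k"

lemma pos_power_sum_from_eq_sum:
  "pos_power_sum_from s u c k = (\<Sum>i<length u. if u ! i = c then (Suc i + s) ^ k else 0)"
proof (induction u arbitrary: s)
  case Nil
  then show ?case by simp
next
  case (Cons x u)
  then show ?case
    by (auto simp: sum.lessThan_Suc_shift simp del: sum.lessThan_Suc intro!: sum.cong)
qed

lemma pos_power_sum_eq_from_0: "pos_power_sum u c k = pos_power_sum_from 0 u c k"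
proof -
  have "pos_power_sum u c k = (\<Sum>t\<in>Suc ` {..<length u}. if u ! (t - 1) = c then t ^ k else 0)"
    unfolding pos_power_sum_def image_Suc_lessThan ..
  also have "\<dots> = (\<Sum>i<length u. if u ! i = c then Suc i ^ k else 0)"
    by (subst sum.reindex) auto
  finally show ?thesis
    by (auto simp: pos_power_sum_from_eq_sum intro!: sum.cong)
qed

lemma pos_power_sum_from_append:
  "pos_power_sum_from s (u @ v) c k = pos_power_sum_from s u c k + pos_power_sum_from (s + length u) v c k"
  by (induction u arbitrary: s) auto

lemma pos_power_sum_from_shift:
  "pos_power_sum_from s v c k = (\<Sum>j\<le>k. (k choose j) * s ^ (k - j) * pos_power_sum_from 0 v c j)"
proof -
  have "pos_power_sum_from s v c k
      = (\<Sum>i<length v. \<Sum>j\<le>k. if v ! i = c then (k choose j) * s ^ (k - j) * Suc i ^ j else 0)"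
    unfolding pos_power_sum_from_eq_sum
    by (intro sum.cong refl) (simp add: binomial_ring[of "Suc i" s k for i, simplified] ac_simps)
  also have "\<dots> = (\<Sum>j\<le>k. (k choose j) * s ^ (k - j) * pos_power_sum_from 0 v c j)"
    by (subst sum.swap) (auto simp: pos_power_sum_from_eq_sum sum_distrib_left intro!: sum.cong)
  finally show ?thesis .
qed

lemma pos_power_sum_append:
  "pos_power_sum (u @ v) c k
     = pos_power_sum u c k + (\<Sum>j\<le>k. (k choose j) * length u ^ (k - j) * pos_power_sum v c j)"
  unfolding pos_power_sum_eq_from_0 pos_power_sum_from_append
  by (simp add: pos_power_sum_from_shift[of "length u"])

lemma regular_pos_power_sum_eq:
  assumes "regular A r u" and "int k \<le> r" and "c \<in> A" and "d \<in> A"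
  shows "pos_power_sum u c k = pos_power_sum u d k"
  using assms unfolding regular_def by blast

lemma hd_in_alphabet: "regular A r u \<Longrightarrow> u \<noteq> [] \<Longrightarrow> hd u \<in> A"
  using hd_in_set unfolding regular_def by blast

lemma regular_mono: "regular A r u \<Longrightarrow> r' \<le> r \<Longrightarrow> regular A r' u"
  unfolding regular_def by (meson order_trans)

lemma regular_append:
  assumes u: "regular A r u" and v: "regular A r v"
  shows "regular A r (u @ v)"
  unfolding regular_def
proof (intro conjI allI impI ballI)
  show "set (u @ v) \<subseteq> A"
    using u v unfolding regular_def by simp
next
  fix k :: nat and c d
  assume k: "int k \<le> r" and cd: "c \<in> A" "d \<in> A"
  have "int j \<le> r" if "j \<le> k" for j
    using k that by linarith
  then show "pos_power_sum (u @ v) c k = pos_power_sum (u @ v) d k"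
    unfolding pos_power_sum_append
    using regular_pos_power_sum_eq[OF u k cd] regular_pos_power_sum_eq[OF v _ cd]
    by (metis (no_types, lifting) atMost_iff sum.cong)
qed

lemma regular_three_letters:
  assumes "set u \<subseteq> {a, b, c}"
    and "\<And>k. int k \<le> r \<Longrightarrow> pos_power_sum u a k = pos_power_sum u b k \<and> pos_power_sum u b k = pos_power_sum u c k"
  shows "regular {a, b, c} r u"
  using assms unfolding regular_def by fastforce

text \<open>Evaluation rules for concrete words. They keep the offsets as numerals (and are used with
  \<open>One_nat_def\<close> removed from the simpset); the defining equations would produce towers of \<open>Suc\<close>.\<close>

lemma pos_power_sum_Cons:
  "pos_power_sum (x # u) c k = (if x = c then 1 else 0) + pos_power_sum_from 1 u c k"
  by (simp add: pos_power_sum_eq_from_0)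

lemma pos_power_sum_from_Cons_numeral:
  "pos_power_sum_from 1 (x # u) c k = (if x = c then 2 ^ k else 0) + pos_power_sum_from 2 u c k"
  "pos_power_sum_from (numeral m) (x # u) c k
     = (if x = c then numeral (m + num.One) ^ k else 0) + pos_power_sum_from (numeral (m + num.One)) u c k"
  by (simp_all add: numeral_plus_one del: One_nat_def)

lemmas pos_power_sum_eval = pos_power_sum_Cons pos_power_sum_from_Cons_numeral pos_power_sum_from.simps(1)

lemma regular_1_length_6:
  assumes "a \<noteq> b" "a \<noteq> c" "b \<noteq> c"
  shows "regular {a, b, c} 1 [a, b, c, c, b, a]" (is "regular _ _ ?w")
proof (rule regular_three_letters)
  fix k :: nat
  assume "int k \<le> 1"
  then consider "k = 0" | "k = 1" by linarith
  then show "pos_power_sum ?w a k = pos_power_sum ?w b k \<and> pos_power_sum ?w b k = pos_power_sum ?w c k"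
    by cases (simp_all add: pos_power_sum_eval assms assms[THEN not_sym]
        del: One_nat_def pos_power_sum_from.simps(2))
qed simp

lemma regular_1_length_9:
  assumes "a \<noteq> b" "a \<noteq> c" "b \<noteq> c"
  shows "regular {a, b, c} 1 [a, b, c, c, a, b, b, c, a]" (is "regular _ _ ?w")
proof (rule regular_three_letters)
  fix k :: nat
  assume "int k \<le> 1"
  then consider "k = 0" | "k = 1" by linarith
  then show "pos_power_sum ?w a k = pos_power_sum ?w b k \<and> pos_power_sum ?w b k = pos_power_sum ?w c k"
    by cases (simp_all add: pos_power_sum_eval assms assms[THEN not_sym]
        del: One_nat_def pos_power_sum_from.simps(2))
qed simp

lemma regular_2_length_18:
  assumes "a \<noteq> b" "a \<noteq> c" "b \<noteq> c"
  shows "regular {a, b, c} 2 [c, a, b, c, a, b, b, b, a, a, c, c, a, c, c, b, b, a]" (is "regular _ _ ?w")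
proof (rule regular_three_letters)
  fix k :: nat
  assume "int k \<le> 2"
  then consider "k = 0" | "k = 1" | "k = 2" by linarith
  then show "pos_power_sum ?w a k = pos_power_sum ?w b k \<and> pos_power_sum ?w b k = pos_power_sum ?w c k"
    by cases (simp_all add: pos_power_sum_eval assms assms[THEN not_sym]
        del: One_nat_def pos_power_sum_from.simps(2))
qed simp

lemma regular_2_length_27:
  assumes "a \<noteq> b" "a \<noteq> c" "b \<noteq> c"
  shows "regular {a, b, c} 2
    [c, c, b, a, b, a, b, a, c, a, b, a, c, b, b, a, a, c, c, c, c, b, c, b, b, a, a]" (is "regular _ _ ?w")
proof (rule regular_three_letters)
  fix k :: nat
  assume "int k \<le> 2"
  then consider "k = 0" | "k = 1" | "k = 2" by linarith
  then show "pos_power_sum ?w a k = pos_power_sum ?w b k \<and> pos_power_sum ?w b k = pos_power_sum ?w c k"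
    by cases (simp_all add: pos_power_sum_eval assms assms[THEN not_sym]
        del: One_nat_def pos_power_sum_from.simps(2))
qed simp

lemma regular_length_multiples:
  assumes u: "regular A r u" "length u = 2 * L"
    and v: "regular A r v" "length v = 3 * L"
    and "2 \<le> m"
  shows "\<exists>w. length w = m * L \<and> regular A r w"
  using \<open>2 \<le> m\<close>
proof (induction m rule: less_induct)
  case (less m)
  consider "m = 2" | "m = 3" | "4 \<le> m" using less.prems by linarith
  then show ?case
  proof cases
    case 3
    then have "m - 2 < m" "2 \<le> m - 2" by auto
    then obtain w where "length w = (m - 2) * L" "regular A r w"
      using less.IH by blast
    moreover have "(m - 2) * L + 2 * L = m * L"
      using 3 by (simp add: diff_mult_distrib)
    ultimately have "length (w @ u) = m * L \<and> regular A r (w @ u)"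
      using u regular_append by auto
    then show ?thesis ..
  qed (use u v in auto)
qed

lemma exists_regular_1_word:
  assumes "a \<noteq> b" "a \<noteq> c" "b \<noteq> c" and "2 \<le> m"
  shows "\<exists>w. length w = 3 * m \<and> regular {a, b, c} 1 w"
  using regular_length_multiples[where L = 3, OF regular_1_length_6 _ regular_1_length_9 _ \<open>2 \<le> m\<close>] assms
  by (simp add: mult.commute)

lemma exists_regular_2_word:
  assumes "a \<noteq> b" "a \<noteq> c" "b \<noteq> c" and "2 \<le> m"
  shows "\<exists>w. length w = 9 * m \<and> regular {a, b, c} 2 w"
  using regular_length_multiples[where L = 9, OF regular_2_length_18 _ regular_2_length_27 _ \<open>2 \<le> m\<close>] assms
  by (simp add: mult.commute)

lemma double_sum_atLeastAtMost_id: "2 * (\<Sum>t = 1..n. t) = n * (n + 1 :: nat)"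
  by (induction n) (simp_all add: atLeastAtMostSuc_conv)

lemma six_sum_atLeastAtMost_square: "6 * (\<Sum>t = 1..n. t ^ 2) = n * (n + 1) * (2 * n + 1 :: nat)"
  by (induction n) (simp_all add: atLeastAtMostSuc_conv algebra_simps power2_eq_square)

definition letter_positions :: "'a list \<Rightarrow> 'a \<Rightarrow> nat set" where
  "letter_positions u c = {t \<in> {1..length u}. u ! (t - 1) = c}"

lemma pos_power_sum_eq_sum_letter_positions:
  "pos_power_sum u c k = (\<Sum>t\<in>letter_positions u c. t ^ k)"
  unfolding pos_power_sum_def letter_positions_def by (rule sum.inter_filter[symmetric]) simp

lemma one_in_letter_positions_hd: "u \<noteq> [] \<Longrightarrow> 1 \<in> letter_positions u (hd u)"
  by (cases u) (auto simp: letter_positions_def)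

lemma letter_positions_subset: "letter_positions u c \<subseteq> {1..length u}"
  by (auto simp: letter_positions_def)

lemma finite_letter_positions: "finite (letter_positions u c)"
  by (simp add: letter_positions_def)

lemma sum_pos_power_sum_over_alphabet:
  assumes "set u \<subseteq> A" and "finite A"
  shows "(\<Sum>c\<in>A. pos_power_sum u c k) = (\<Sum>t = 1..length u. t ^ k)"
  unfolding pos_power_sum_def
proof (subst sum.swap, rule sum.cong[OF refl])
  fix t
  assume "t \<in> {1..length u}"
  then have "u ! (t - 1) \<in> A"
    using assms(1) nth_mem[of "t - 1" u] by auto
  then show "(\<Sum>c\<in>A. if u ! (t - 1) = c then t ^ k else 0) = t ^ k"
    using assms(2) by (simp add: sum.delta)
qed

lemma regular_card_mult_pos_power_sum:
  assumes "finite A" and "regular A r u" and "int k \<le> r" and "c \<in> A"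
  shows "card A * pos_power_sum u c k = (\<Sum>t = 1..length u. t ^ k)"
proof -
  have "(\<Sum>t = 1..length u. t ^ k) = (\<Sum>d\<in>A. pos_power_sum u d k)"
    using assms(1,2) unfolding regular_def by (simp add: sum_pos_power_sum_over_alphabet)
  also have "\<dots> = (\<Sum>d\<in>A. pos_power_sum u c k)"
    using assms(2-4) by (intro sum.cong refl) (rule regular_pos_power_sum_eq)
  finally show ?thesis by simp
qed

lemma regular_hd_letter_positions:
  assumes "card A = 3" and "regular A r u" and "u \<noteq> []" and "int k \<le> r"
  shows "3 * (\<Sum>t\<in>letter_positions u (hd u). t ^ k) = (\<Sum>t = 1..length u. t ^ k)"
  using regular_card_mult_pos_power_sum[OF _ assms(2,4) hd_in_alphabet[OF assms(2,3)]] assms(1)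
  by (simp add: card_ge_0_finite pos_power_sum_eq_sum_letter_positions)

lemma regular_1_length:
  assumes "card A = 3" and "regular A 1 u" and "u \<noteq> []"
  shows "\<exists>m\<ge>2. length u = 3 * m"
proof -
  define S where "S = letter_positions u (hd u)"
  have S: "3 * (\<Sum>t\<in>S. t ^ k) = (\<Sum>t = 1..length u. t ^ k)" if "k \<le> 1" for k
    unfolding S_def using that by (intro regular_hd_letter_positions[OF assms]) simp
  have count: "3 * card S = length u"
    using S[of 0] by simp
  have "1 \<in> S" and "finite S"
    unfolding S_def using one_in_letter_positions_hd[OF assms(3)] finite_letter_positions .
  moreover have "card S \<noteq> 1"
  proof
    assume "card S = 1"
    with \<open>1 \<in> S\<close> have "S = {1}" and "length u = 3"
      using count by (auto simp: card_1_singleton_iff)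
    then show False
      using S[of 1] double_sum_atLeastAtMost_id[of 3] by simp
  qed
  ultimately have "card S \<ge> 2"
    using card_0_eq[of S] by (cases "card S") auto
  then show ?thesis
    using count by auto
qed

lemma no_positions_1_of_9_with_sums_15_95:
  assumes "S \<subseteq> {1..9}" and "1 \<in> S" and "card S = 3" and "(\<Sum>t\<in>S. t) = (15 :: nat)"
  shows "(\<Sum>t\<in>S. t ^ 2) \<noteq> 95"
proof
  assume squares: "(\<Sum>t\<in>S. t ^ 2) = 95"
  have "card (S - {1}) = 2"
    using assms(2,3) by simp
  then obtain q r where qr: "S - {1} = {q, r}" "q \<noteq> r"
    by (auto simp: card_2_iff)
  then have S: "S = {1, q, r}" and "q \<noteq> 1" "r \<noteq> 1"
    using assms(2) by auto
  then have "q + r = 14" and "q ^ 2 + r ^ 2 = 94" and "q \<le> 9" and "r \<le> 9"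
    using assms(1,4) squares qr(2) by auto
  then have "r = 14 - q" and "q \<in> {5, 6, 7, 8, 9}"
    by auto
  with \<open>q ^ 2 + r ^ 2 = 94\<close> show False
    by (auto simp: power2_eq_square)
qed

lemma regular_2_length:
  assumes "card A = 3" and "regular A 2 u" and "u \<noteq> []"
  shows "\<exists>j\<ge>2. length u = 9 * j"
proof -
  define S where "S = letter_positions u (hd u)"
  have S: "3 * (\<Sum>t\<in>S. t ^ k) = (\<Sum>t = 1..length u. t ^ k)" if "k \<le> 2" for k
    unfolding S_def using that by (intro regular_hd_letter_positions[OF assms]) simp
  obtain m where "m \<ge> 2" and m: "length u = 3 * m"
    using regular_1_length[OF assms(1) regular_mono[OF assms(2)] assms(3)] by auto
  have "18 * (\<Sum>t\<in>S. t ^ 2) = 3 * m * (3 * m + 1) * (6 * m + 1)"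
    using S[of 2] six_sum_atLeastAtMost_square[of "length u"] m by simp
  then have "6 * (\<Sum>t\<in>S. t ^ 2) = m + 3 * (6 * m * m * m + 3 * m * m)"
    by (simp add: algebra_simps)
  then have "3 dvd m"
    by presburger
  then obtain j where j: "m = 3 * j"
    by blast
  have "j \<noteq> 1"
  proof
    assume "j = 1"
    then have "length u = 9"
      using m j by simp
    moreover have "1 \<in> S" "S \<subseteq> {1..length u}" "3 * card S = length u"
      using one_in_letter_positions_hd[OF assms(3)] letter_positions_subset S[of 0]
      by (simp_all add: S_def)
    ultimately show False
      using S[of 1] S[of 2] double_sum_atLeastAtMost_id[of 9] six_sum_atLeastAtMost_square[of 9]
        no_positions_1_of_9_with_sums_15_95[of S]
      by simp
  qed
  then show ?thesis
    using \<open>m \<ge> 2\<close> m j by (intro exI[of _ j]) auto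
qed

theorem mainTheorem12:
  fixes A :: "'a set" and n :: nat
  assumes "card A = 3" and "n \<ge> 1"
  shows "((\<exists>u. length u = n \<and> regular A 1 u) \<longleftrightarrow> (\<exists>k::nat. k \<ge> 2 \<and> n = 3 * k))
       \<and> ((\<exists>u. length u = n \<and> regular A 2 u) \<longleftrightarrow> (\<exists>k::nat. k \<ge> 2 \<and> n = 9 * k))"
proof -
  obtain a b c where A: "A = {a, b, c}" and abc: "a \<noteq> b" "a \<noteq> c" "b \<noteq> c"
    using assms(1) card_3_iff[of A] by blast
  have nonempty: "u \<noteq> []" if "length u = n" for u :: "'a list"
    using that assms(2) by auto
  show ?thesis
    using regular_1_length[OF assms(1) _ nonempty] regular_2_length[OF assms(1) _ nonempty]
      exists_regular_1_word[OF abc] exists_regular_2_word[OF abc]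
    unfolding A by blast
qed

end
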